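(* Let $\mathcal L$ be an optionality-differentiating choice logic. Then for all $\mathcal L$-formulas $A,B$: $A\equiv^{s}_{\mathcal L}B$ if and only if $A\equiv^{\mathrm{full}}_{\mathcal L}B$.
   Context: Fix a countably infinite set $\mathcal U$ of propositional variables. Let $\mathbb N=\{1,2,3,\dots\}$ and $\overline{\mathbb N}=\mathbb N\cup\{\infty\}$, with $n<\infty$ for all $n\in\mathbb N$. An interpretation is a set $\mathcal I\subseteq\mathcal U$ (the variables set to true). A choice logic $\mathcal L$ is specified by a finite set $C_{\mathcal L}$ of binary connective symbols disjoint from $\{\neg,\land,\lor\}$ and, for each $\circ\in C_{\mathcal L}$, a function $\mathrm{opt}_\circ:\mathbb N^2\to\mathbb N$ with $\mathrm{opt}_\circ(k,\ell)\le (k+1)(\ell+1)$ for all $k,\ell$, and a function $\deg_\circ:\mathbb N^2\times\overline{\mathbb N}^2\to\overline{\mathbb N}$ such that for all $k,\ell\in\mathbb N$, $m,n\in\overline{\mathbb N}$, either $\deg_\circ(k,\ell,m,n)\le \mathrm{opt}_\circ(k,\ell)$ or $\deg_\circ(k,\ell,m,n)=\infty$. The $\mathcal L$-formulas are built from variables in $\mathcal U$ using unary $\neg$ and binary $\land,\lor$ and the connectives in $C_{\mathcal L}$. The optionality $\mathrm{opt}_{\mathcal L}$ of formulas is defined by: $\mathrm{opt}_{\mathcal L}(a)=1$ for $a\in\mathcal U$; $\mathrm{opt}_{\mathcal L}(\neg F)=1$; $\mathrm{opt}_{\mathcal L}(F\land G)=\mathrm{opt}_{\mathcal L}(F\lor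 G)=\max(\mathrm{opt}_{\mathcal L}(F),\mathrm{opt}_{\mathcal L}(G))$; $\mathrm{opt}_{\mathcal L}(F\circ G)=\mathrm{opt}_\circ(\mathrm{opt}_{\mathcal L}(F),\mathrm{opt}_{\mathcal L}(G))$ for $\circ\in C_{\mathcal L}$. The satisfaction degree $\deg_{\mathcal L}(\mathcal I,F)\in\overline{\mathbb N}$ is defined by: $\deg_{\mathcal L}(\mathcal I,a)=1$ if $a\in\mathcal I$ and $\infty$ otherwise; $\deg_{\mathcal L}(\mathcal I,\neg F)=1$ if $\deg_{\mathcal L}(\mathcal I,F)=\infty$ and $\infty$ otherwise; $\deg_{\mathcal L}(\mathcal I,F\land G)=\max(\deg_{\mathcal L}(\mathcal I,F),\deg_{\mathcal L}(\mathcal I,G))$; $\deg_{\mathcal L}(\mathcal I,F\lor G)=\min(\deg_{\mathcal L}(\mathcal I,F),\deg_{\mathcal L}(\mathcal I,G))$; $\deg_{\mathcal L}(\mathcal I,F\circ G)=\deg_\circ(\mathrm{opt}_{\mathcal L}(F),\mathrm{opt}_{\mathcal L}(G),\deg_{\mathcal L}(\mathcal I,F),\deg_{\mathcal L}(\mathcal I,G))$ for $\circ\in C_{\mathcal L}$. An interpretation $\mathcal I$ is a preferred model of $F$, written $\mathcal I\in\mathrm{Pref}_{\mathcal L}(F)$, if $\deg_{\mathcal L}(\mathcal I,F)\ne\infty$ and $\deg_{\mathcal L}(\mathcal I,F)\le\deg_{\mathcal L}(\mathcal J,F)$ for all interpretations $\mathcal J$. $F[A/B]$ denotes the formula obtained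 from $F$ by replacing an occurrence of the subformula $A$ by $B$ (and equals $F$ if $A$ does not occur in $F$). Two $\mathcal L$-formulas $A,B$ are degree-equivalent, $A\equiv^{\deg}_{\mathcal L}B$, if $\deg_{\mathcal L}(\mathcal I,A)=\deg_{\mathcal L}(\mathcal I,B)$ for all interpretations $\mathcal I$; they are fully equivalent, $A\equiv^{\mathrm{full}}_{\mathcal L}B$, if $A\equiv^{\deg}_{\mathcal L}B$ and $\mathrm{opt}_{\mathcal L}(A)=\mathrm{opt}_{\mathcal L}(B)$; they are strongly equivalent, $A\equiv^{s}_{\mathcal L}B$, if $\mathrm{Pref}_{\mathcal L}(F)=\mathrm{Pref}_{\mathcal L}(F[A/B])$ for all $\mathcal L$-formulas $F$. $\mathcal L$ is optionality-differentiating if for all $\mathcal L$-formulas $A,B$ with $\mathrm{opt}_{\mathcal L}(A)\neq\mathrm{opt}_{\mathcal L}(B)$ there is an $\mathcal L$-formula $F$ with $F\not\equiv^{\deg}_{\mathcal L}F[A/B]$. *)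

theory Defs
  imports Main "HOL-Library.Extended_Nat"
begin

text \<open>Propositional variables: the countably infinite set U is rendered as type nat.
  Connective symbols of a choice logic are elements of a set C of an arbitrary type 'c;
  the classical connectives are separate datatype constructors, hence disjoint from C.
  Degrees live in enat, where the satisfaction degrees used are 1,2,... or \<infinity>.\<close>

datatype 'c form =
    Var nat
  | Neg "'c form"
  | Conj "'c form" "'c form"
  | Disj "'c form" "'c form"
  | Conn 'c "'c form" "'c form"

text \<open>A choice logic: a finite set C of connectives, with optionality functions
  opt c : N^2 \<rightarrow> N and degree functions dg c : N^2 \<times> Nbar^2 \<rightarrow> Nbar
  (constraints imposed on N = {1,2,..}, Nbar = N \<union> {\<infinity>}).\<close>

definition choice_logic ::
  "'c set \<Rightarrow> ('c \<Rightarrow> nat \<Rightarrow> nat \<Rightarrow> nat) \<Rightarrow> ('c \<Rightarrow> nat \<Rightarrow> nat \<Rightarrow> enat \<Rightarrow> enat \<Rightarrow> enat) \<Rightarrow> bool"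
where
  "choice_logic C opt dg \<longleftrightarrow>
     finite C \<and>
     (\<forall>c\<in>C. \<forall>k l. 1 \<le> k \<longrightarrow> 1 \<le> l \<longrightarrow>
         1 \<le> opt c k l \<and> opt c k l \<le> (k + 1) * (l + 1)) \<and>
     (\<forall>c\<in>C. \<forall>k l m n. 1 \<le> k \<longrightarrow> 1 \<le> l \<longrightarrow> 1 \<le> m \<longrightarrow> 1 \<le> n \<longrightarrow>
         1 \<le> dg c k l m n \<and>
         (dg c k l m n \<le> enat (opt c k l) \<or> dg c k l m n = \<infinity>))"

fun wf_form :: "'c set \<Rightarrow> 'c form \<Rightarrow> bool" where
  "wf_form C (Var a) = True"
| "wf_form C (Neg F) = wf_form C F"
| "wf_form C (Conj F G) = (wf_form C F \<and> wf_form C G)"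
| "wf_form C (Disj F G) = (wf_form C F \<and> wf_form C G)"
| "wf_form C (Conn c F G) = (c \<in> C \<and> wf_form C F \<and> wf_form C G)"

fun fopt :: "('c \<Rightarrow> nat \<Rightarrow> nat \<Rightarrow> nat) \<Rightarrow> 'c form \<Rightarrow> nat" where
  "fopt opt (Var a) = 1"
| "fopt opt (Neg F) = 1"
| "fopt opt (Conj F G) = max (fopt opt F) (fopt opt G)"
| "fopt opt (Disj F G) = max (fopt opt F) (fopt opt G)"
| "fopt opt (Conn c F G) = opt c (fopt opt F) (fopt opt G)"

fun fdeg :: "('c \<Rightarrow> nat \<Rightarrow> nat \<Rightarrow> nat) \<Rightarrow> ('c \<Rightarrow> nat \<Rightarrow> nat \<Rightarrow> enat \<Rightarrow> enat \<Rightarrow> enat)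
             \<Rightarrow> nat set \<Rightarrow> 'c form \<Rightarrow> enat" where
  "fdeg opt dg I (Var a) = (if a \<in> I then 1 else \<infinity>)"
| "fdeg opt dg I (Neg F) = (if fdeg opt dg I F = \<infinity> then 1 else \<infinity>)"
| "fdeg opt dg I (Conj F G) = max (fdeg opt dg I F) (fdeg opt dg I G)"
| "fdeg opt dg I (Disj F G) = min (fdeg opt dg I F) (fdeg opt dg I G)"
| "fdeg opt dg I (Conn c F G) =
     dg c (fopt opt F) (fopt opt G) (fdeg opt dg I F) (fdeg opt dg I G)"

definition pref :: "('c \<Rightarrow> nat \<Rightarrow> nat \<Rightarrow> nat) \<Rightarrow> ('c \<Rightarrow> nat \<Rightarrow> nat \<Rightarrow> enat \<Rightarrow> enat \<Rightarrow> enat)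
             \<Rightarrow> 'c form \<Rightarrow> nat set set" where
  "pref opt dg F = {I. fdeg opt dg I F \<noteq> \<infinity> \<and> (\<forall>J. fdeg opt dg I F \<le> fdeg opt dg J F)}"

inductive replace_occ :: "'c form \<Rightarrow> 'c form \<Rightarrow> 'c form \<Rightarrow> 'c form \<Rightarrow> bool"
  for A B where
  here: "replace_occ A B A B"
| neg: "replace_occ A B F F' \<Longrightarrow> replace_occ A B (Neg F) (Neg F')"
| conjL: "replace_occ A B F F' \<Longrightarrow> replace_occ A B (Conj F G) (Conj F' G)"
| conjR: "replace_occ A B G G' \<Longrightarrow> replace_occ A B (Conj F G) (Conj F G')"
| disjL: "replace_occ A B F F' \<Longrightarrow> replace_occ A B (Disj F G) (Disj F' G)"
| disjR: "replace_occ A B G G' \<Longrightarrow> replace_occ A B (Disj F G) (Disj F G')"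
| connL: "replace_occ A B F F' \<Longrightarrow> replace_occ A B (Conn c F G) (Conn c F' G)"
| connR: "replace_occ A B G G' \<Longrightarrow> replace_occ A B (Conn c F G) (Conn c F G')"

definition deg_equiv where
  "deg_equiv opt dg A B \<longleftrightarrow> (\<forall>I. fdeg opt dg I A = fdeg opt dg I B)"

definition full_equiv where
  "full_equiv opt dg A B \<longleftrightarrow> deg_equiv opt dg A B \<and> fopt opt A = fopt opt B"

text \<open>Strong equivalence: Pref(F) = Pref(F[A/B]) for all L-formulas F (if A does not
  occur in F then F[A/B] = F and the condition holds trivially).\<close>
definition strong_equiv where
  "strong_equiv C opt dg A B \<longleftrightarrow>
     (\<forall>F F'. wf_form C F \<longrightarrow> replace_occ A B F F' \<longrightarrow> pref opt dg F = pref opt dg F')"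

definition opt_differentiating where
  "opt_differentiating C opt dg \<longleftrightarrow>
     (\<forall>A B. wf_form C A \<longrightarrow> wf_form C B \<longrightarrow> fopt opt A \<noteq> fopt opt B \<longrightarrow>
        (\<exists>F F'. wf_form C F \<and> replace_occ A B F F' \<and> \<not> deg_equiv opt dg F F'))"

end

theory Submission
  imports Defs
begin

text \<open>Full equivalence is a congruence for every connective, so it implies strong equivalence.
  Conversely, if A and B differ in degree at some interpretation I, put them into the context
  (A \<and> \<not>z \<and> \<chi>) \<or> (B \<and> z \<and> \<chi>), where \<chi> holds exactly on the interpretations agreeing with I
  on the variables of A and B and z is a fresh variable. Replacing A by B changes the
  preferred models: flipping z selects A or B, so whichever of the two degrees is smaller is
  visible in the preferred models. Finally, strong equivalence is inherited by the results
  of a replacement, so optionality differentiation turns different optionalities into a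
  difference in degree.\<close>

fun vars :: "'c form \<Rightarrow> nat list" where
  "vars (Var a) = [a]"
| "vars (Neg F) = vars F"
| "vars (Conj F G) = vars F @ vars G"
| "vars (Disj F G) = vars F @ vars G"
| "vars (Conn c F G) = vars F @ vars G"

lemma fdeg_cong_vars:
  "(\<And>x. x \<in> set (vars F) \<Longrightarrow> x \<in> I \<longleftrightarrow> x \<in> J) \<Longrightarrow> fdeg opt dg I F = fdeg opt dg J F"
  by (induction F) auto

fun char_form :: "nat set \<Rightarrow> nat list \<Rightarrow> 'c form" where
  "char_form I [] = Disj (Var 0) (Neg (Var 0))"
| "char_form I (x # xs) = Conj (if x \<in> I then Var x else Neg (Var x)) (char_form I xs)"

lemma wf_form_char_form: "wf_form C (char_form I xs)"
  by (induction xs) auto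

lemma fdeg_char_form:
  "fdeg opt dg J (char_form I xs) = (if \<forall>x\<in>set xs. x \<in> J \<longleftrightarrow> x \<in> I then 1 else \<infinity>)"
  by (induction xs) (auto simp: max_def)

lemma fdeg_ge_1:
  assumes "choice_logic C opt dg" "wf_form C F"
  shows "1 \<le> fdeg opt dg I F"
proof -
  have "1 \<le> fopt opt F \<and> 1 \<le> fdeg opt dg I F"
    using assms(2)
  proof (induction F)
    case (Conn c F G)
    then show ?case using assms(1) unfolding choice_logic_def by auto
  qed (auto simp: le_max_iff_disj min_def)
  then show ?thesis ..
qed

definition switch_form :: "'c form \<Rightarrow> 'c form \<Rightarrow> nat \<Rightarrow> 'c form \<Rightarrow> 'c form" where
  "switch_form A B z X = Disj (Conj A (Conj (Neg (Var z)) X)) (Conj B (Conj (Var z) X))"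

lemma fdeg_switch_form:
  assumes "1 \<le> fdeg opt dg J A" "1 \<le> fdeg opt dg J B"
    and "fdeg opt dg J X \<in> {1, \<infinity>}"
  shows "fdeg opt dg J (switch_form A B z X) =
    (if fdeg opt dg J X = \<infinity> then \<infinity> else if z \<in> J then fdeg opt dg J B else fdeg opt dg J A)"
  using assms by (auto simp: switch_form_def max_def min_def)

lemma pref_eq_imp_degrees_eq:
  assumes "pref opt dg F = pref opt dg F'"
    and "\<And>K. fdeg opt dg K F \<in> {k, m, \<infinity>}" and "\<And>K. fdeg opt dg K F' \<in> {m, \<infinity>}"
    and "fdeg opt dg J F = k" "fdeg opt dg J F' = m"
    and "fdeg opt dg J' F = m" "fdeg opt dg J' F' = m"
  shows "k = m"
proof (rule ccontr)
  assume "k \<noteq> m"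
  have F'_ge: "m \<le> fdeg opt dg K F'" for K
    using assms(3)[of K] by auto
  consider "k < m" "m = \<infinity>" | "k < m" "m \<noteq> \<infinity>" | "m < k"
    using \<open>k \<noteq> m\<close> by fastforce
  then show False
  proof cases
    case 1
    have "k \<le> fdeg opt dg K F" for K
      using 1 assms(2)[of K] by auto
    then have "J \<in> pref opt dg F"
      using 1 assms(4) unfolding pref_def by auto
    moreover have "J \<notin> pref opt dg F'"
      using 1 assms(5) unfolding pref_def by simp
    ultimately show False using assms(1) by simp
  next
    case 2
    have "J' \<in> pref opt dg F'"
      using 2 assms(7) F'_ge unfolding pref_def by auto
    moreover have "J' \<notin> pref opt dg F"
      using 2 assms(4,6) unfolding pref_def by (auto simp: not_le)
    ultimately show False using assms(1) by simp
  next
    case 3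
    then have "m \<noteq> \<infinity>" by (cases m) auto
    then have "J \<in> pref opt dg F'"
      using assms(5) F'_ge unfolding pref_def by auto
    moreover have "J \<notin> pref opt dg F"
      using 3 assms(4,6) unfolding pref_def by (auto simp: not_le)
    ultimately show False using assms(1) by simp
  qed
qed

lemma strong_equiv_imp_deg_equiv:
  fixes A B :: "'c form"
  assumes cl: "choice_logic C opt dg" and wA: "wf_form C A" and wB: "wf_form C B"
    and st: "strong_equiv C opt dg A B"
  shows "deg_equiv opt dg A B"
  unfolding deg_equiv_def
proof
  fix I
  define xs where "xs = vars A @ vars B"
  obtain z where z: "z \<notin> set xs"
    using ex_new_if_finite[OF infinite_UNIV_nat, of "set xs"] by auto
  define X :: "'c form" where "X = char_form I xs"
  define agrees where "agrees J \<longleftrightarrow> (\<forall>x\<in>set xs. x \<in> J \<longleftrightarrow> x \<in> I)" for J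
  have X_deg: "fdeg opt dg J X = (if agrees J then 1 else \<infinity>)" for J
    by (simp add: X_def fdeg_char_form agrees_def)
  have ge_1: "1 \<le> fdeg opt dg J A" "1 \<le> fdeg opt dg J B" for J
    using fdeg_ge_1[OF cl] wA wB by auto
  have degs:
    "fdeg opt dg J (switch_form A B z X) =
       (if agrees J then (if z \<in> J then fdeg opt dg I B else fdeg opt dg I A) else \<infinity>)"
    "fdeg opt dg J (switch_form B B z X) = (if agrees J then fdeg opt dg I B else \<infinity>)" for J
  proof -
    have "fdeg opt dg J A = fdeg opt dg I A \<and> fdeg opt dg J B = fdeg opt dg I B" if "agrees J"
      using that unfolding agrees_def xs_def by (auto intro!: fdeg_cong_vars)
    then show "fdeg opt dg J (switch_form A B z X) =
       (if agrees J then (if z \<in> J then fdeg opt dg I B else fdeg opt dg I A) else \<infinity>)"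
      "fdeg opt dg J (switch_form B B z X) = (if agrees J then fdeg opt dg I B else \<infinity>)"
      using ge_1[of J] by (simp_all add: fdeg_switch_form X_deg)
  qed
  have "replace_occ A B (switch_form A B z X) (switch_form B B z X)"
    unfolding switch_form_def by (intro replace_occ.disjL replace_occ.conjL replace_occ.here)
  moreover have "wf_form C (switch_form A B z X)"
    using wA wB by (simp add: switch_form_def X_def wf_form_char_form)
  ultimately have pref_eq:
    "pref opt dg (switch_form A B z X) = pref opt dg (switch_form B B z X)"
    using st unfolding strong_equiv_def by blast
  have agree: "agrees (I - {z})" "agrees (insert z I)"
    using z by (auto simp: agrees_def)
  show "fdeg opt dg I A = fdeg opt dg I B"
    by (rule pref_eq_imp_degrees_eq[OF pref_eq, where J = "I - {z}" and J' = "insert z I"])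
      (simp_all add: degs agree)
qed

lemma replace_occ_full_equiv:
  "replace_occ A B F F' \<Longrightarrow> full_equiv opt dg A B \<Longrightarrow> full_equiv opt dg F F'"
  by (induction rule: replace_occ.induct) (auto simp: full_equiv_def deg_equiv_def)

lemma replace_occ_trans:
  "replace_occ F F' G G' \<Longrightarrow> replace_occ A B F F' \<Longrightarrow> replace_occ A B G G'"
  by (induction rule: replace_occ.induct) (auto intro: replace_occ.intros)

lemma wf_form_replace_occ:
  "replace_occ A B F F' \<Longrightarrow> wf_form C F \<Longrightarrow> wf_form C B \<Longrightarrow> wf_form C F'"
  by (induction rule: replace_occ.induct) auto

lemma strong_equiv_replace_occ:
  "strong_equiv C opt dg A B \<Longrightarrow> replace_occ A B F F' \<Longrightarrow> strong_equiv C opt dg F F'"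
  unfolding strong_equiv_def by (blast intro: replace_occ_trans)

lemma full_equiv_imp_strong_equiv:
  assumes "full_equiv opt dg A B"
  shows "strong_equiv C opt dg A B"
  unfolding strong_equiv_def
proof (intro allI impI)
  fix F F'
  assume "replace_occ A B F F'"
  then have "deg_equiv opt dg F F'"
    using replace_occ_full_equiv assms full_equiv_def by blast
  then show "pref opt dg F = pref opt dg F'"
    by (simp add: pref_def deg_equiv_def)
qed

theorem mainTheorem8:
  fixes C :: "'c set"
    and opt :: "'c \<Rightarrow> nat \<Rightarrow> nat \<Rightarrow> nat"
    and dg :: "'c \<Rightarrow> nat \<Rightarrow> nat \<Rightarrow> enat \<Rightarrow> enat \<Rightarrow> enat"
    and A B :: "'c form"
  assumes "choice_logic C opt dg"
    and "opt_differentiating C opt dg"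
    and "wf_form C A" and "wf_form C B"
  shows "strong_equiv C opt dg A B \<longleftrightarrow> full_equiv opt dg A B"
proof
  assume st: "strong_equiv C opt dg A B"
  have "fopt opt A = fopt opt B"
  proof (rule ccontr)
    assume "fopt opt A \<noteq> fopt opt B"
    then obtain F F' where F: "wf_form C F" "replace_occ A B F F'" "\<not> deg_equiv opt dg F F'"
      using assms(2-4) unfolding opt_differentiating_def by blast
    have "deg_equiv opt dg F F'"
      using strong_equiv_imp_deg_equiv[OF assms(1) F(1)] F(1,2) assms(4)
        wf_form_replace_occ strong_equiv_replace_occ[OF st] by blast
    with F(3) show False ..
  qed
  with strong_equiv_imp_deg_equiv[OF assms(1,3,4) st] show "full_equiv opt dg A B"
    unfolding full_equiv_def by simp
qed (rule full_equiv_imp_strong_equiv)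

end
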